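(* Let $x$ be an infinite word and let $k,\lambda\in\mathbb{N}=\{1,2,3,\dots\}$ be such that $$\underline{d}(\mathrm{AP}(x,k,\lambda)) < \left(1+\left\lfloor\frac{k^2-k}{\lambda^2+\lambda}\right\rfloor\right)^{-1}.$$ Then for every positive integer $\ell$ there is a word $u$ with $|u|\le (k-1)\left\lfloor\frac{k^2-k}{\lambda^2+\lambda}\right\rfloor$ such that $u^\ell$ is a factor of $x$.
   Context: A factor is a contiguous subword; $|u|$ is the length of $u$ and $u^\ell$ is $\ell$ concatenated copies of $u$. A $(k,\lambda)$-anti-power is a word $w=w_1\cdots w_k$ with $|w_1|=\cdots=|w_k|$ such that $|\{i: w_i=w_j\}|\le\lambda$ for each $j\in\{1,\dots,k\}$. $\mathrm{AP}(x,k,\lambda)$ is the set of $m\in\mathbb{N}$ such that the prefix of $x$ of length $km$ is a $(k,\lambda)$-anti-power. For $S\subseteq\mathbb{N}$, the lower density is $\underline{d}(S)=\liminf_{n\to\infty}|S\cap\{1,\dots,n\}|/n$. *)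

theory Defs
  imports Complex_Main "HOL-Library.Extended_Real" "HOL-Library.Liminf_Limsup"
begin

definition pref :: "(nat \<Rightarrow> 'a) \<Rightarrow> nat \<Rightarrow> 'a list" where
  "pref x n = map x [0..<n]"

definition is_factor :: "'a list \<Rightarrow> (nat \<Rightarrow> 'a) \<Rightarrow> bool" where
  "is_factor u x \<longleftrightarrow> (\<exists>i. \<forall>j<length u. x (i + j) = u ! j)"

definition lpow :: "'a list \<Rightarrow> nat \<Rightarrow> 'a list" where
  "lpow u l = concat (replicate l u)"

text \<open>(k,lambda)-anti-power: w = w_1...w_k with equal-length blocks, each block
  occurring at most lambda times among the blocks (blocks indexed 0..k-1 here).\<close>
definition anti_power :: "nat \<Rightarrow> nat \<Rightarrow> 'a list \<Rightarrow> bool" where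
  "anti_power k lam w \<longleftrightarrow> (\<exists>m. length w = k * m \<and>
     (\<forall>j<k. card {i. i < k \<and> take m (drop (i*m) w) = take m (drop (j*m) w)} \<le> lam))"

definition AP :: "(nat \<Rightarrow> 'a) \<Rightarrow> nat \<Rightarrow> nat \<Rightarrow> nat set" where
  "AP x k lam = {m. m \<ge> 1 \<and> anti_power k lam (pref x (k * m))}"

definition lower_density :: "nat set \<Rightarrow> ereal" where
  "lower_density S = liminf (\<lambda>n. ereal (real (card (S \<inter> {1..n})) / real n))"

end

theory Submission
  imports Defs "HOL-Library.Disjoint_Sets"
begin

(* Let N = (k^2 - k) div (lam^2 + lam). Lower density below 1/(N+1) forces AP x k lam to miss
   N+1 consecutive lengths s, ..., s+N with s arbitrarily large. For a missing length m some block
   of the prefix of length k*m occurs more than lam times, which yields at least lam*(lam+1)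
   ordered pairs (a,b), a ~= b, of equal blocks. Since only k^2 - k < (N+1)*(lam^2 + lam) such
   pairs exist, one pair a < b serves two lengths m < m+e. Comparing the equal blocks a and b at
   both lengths shows that x has period (b-a)*e on a segment of length about m, so it contains
   the l-th power of a word of length (b-a)*e <= (k-1)*N as soon as m >= l*(k-1)*N. *)

lemma length_lpow [simp]: "length (lpow u l) = l * length u"
  by (induction l) (simp_all add: lpow_def)

lemma nth_lpow: "j < l * length u \<Longrightarrow> lpow u l ! j = u ! (j mod length u)"
proof (induction l arbitrary: j)
  case (Suc l)
  have "lpow u (Suc l) = u @ lpow u l" by (simp add: lpow_def)
  with Suc show ?case
    by (cases "j < length u") (simp_all add: nth_append le_mod_geq)
qed simp

lemma is_factor_lpow_if_periodic:
  assumes "q > 0" and periodic: "\<forall>i. i + q < L \<longrightarrow> x (p + i) = x (p + i + q)"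
    and "l * q \<le> L"
  shows "is_factor (lpow (map x [p..<p+q]) l) x"
proof -
  have mod_period: "x (p + j) = x (p + j mod q)" if "j < L" for j
    using that
  proof (induction j rule: less_induct)
    case (less j)
    show ?case
    proof (cases "j < q")
      case False
      then have "x (p + j) = x (p + (j - q))"
        using periodic less.prems by (metis le_add_diff_inverse2 not_less add.assoc)
      also have "\<dots> = x (p + (j - q) mod q)"
        using less False assms(1) by (intro less.IH) auto
      also have "(j - q) mod q = j mod q"
        using False by (simp add: le_mod_geq)
      finally show ?thesis .
    qed simp
  qed
  show ?thesis
    unfolding is_factor_def
  proof (intro exI allI impI)
    fix j assume "j < length (lpow (map x [p..<p+q]) l)"
    then have "j < l * q" by simp
    then show "x (p + j) = lpow (map x [p..<p+q]) l ! j"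
      using mod_period[of j] assms(1,3) by (simp add: nth_lpow)
  qed
qed

definition block :: "(nat \<Rightarrow> 'a) \<Rightarrow> nat \<Rightarrow> nat \<Rightarrow> 'a list" where
  "block x m i = map x [i*m..<i*m+m]"

lemma take_drop_pref: "i*m + m \<le> n \<Longrightarrow> take m (drop (i*m) (pref x n)) = block x m i"
  by (simp add: pref_def block_def drop_map take_map)

lemma block_eq_iff: "block x m a = block x m b \<longleftrightarrow> (\<forall>t<m. x (a*m + t) = x (b*m + t))"
  by (simp add: block_def list_eq_iff_nth_eq)

lemma not_anti_power_pref:
  assumes "\<not> anti_power k lam (pref x (k*m))"
  obtains j where "j < k" and "lam < card {i. i < k \<and> block x m i = block x m j}"
proof -
  have "take m (drop (i*m) (pref x (k*m))) = block x m i" if "i < k" for i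
    using that by (intro take_drop_pref) (metis Suc_leI add.commute mult_Suc mult_le_mono1)
  then have "{i. i < k \<and> take m (drop (i*m) (pref x (k*m))) = take m (drop (j*m) (pref x (k*m)))}
      = {i. i < k \<and> block x m i = block x m j}" if "j < k" for j
    using that by auto
  with assms that show ?thesis
    unfolding anti_power_def by (fastforce simp: pref_def)
qed

lemma card_off_diagonal:
  assumes "finite S"
  shows "card (S \<times> S - Id_on S) = card S * (card S - 1)"
proof -
  have "Id_on S = (\<lambda>a. (a, a)) ` S" by auto
  then have "card (Id_on S) = card S"
    by (simp add: card_image inj_on_def)
  moreover have "finite (Id_on S)"
    using assms by (simp add: \<open>Id_on S = _\<close>)
  ultimately show ?thesis
    using assms by (simp add: card_Diff_subset card_cartesian_product diff_mult_distrib2 Id_on_subset_Times)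
qed

definition equal_block_pairs :: "(nat \<Rightarrow> 'a) \<Rightarrow> nat \<Rightarrow> nat \<Rightarrow> (nat \<times> nat) set" where
  "equal_block_pairs x k m = {(a, b). a < k \<and> b < k \<and> a \<noteq> b \<and> block x m a = block x m b}"

lemma equal_block_pairs_subset: "equal_block_pairs x k m \<subseteq> {..<k} \<times> {..<k} - Id_on {..<k}"
  by (auto simp: equal_block_pairs_def)

lemma card_equal_block_pairs_ge:
  assumes "\<not> anti_power k lam (pref x (k*m))"
  shows "lam * (lam + 1) \<le> card (equal_block_pairs x k m)"
proof -
  obtain j where "j < k" and card_S: "lam < card {i. i < k \<and> block x m i = block x m j}"
    using not_anti_power_pref[OF assms] .
  define S where "S = {i. i < k \<and> block x m i = block x m j}"
  have "S \<times> S - Id_on S \<subseteq> equal_block_pairs x k m"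
    by (auto simp: S_def equal_block_pairs_def)
  then have "card (S \<times> S - Id_on S) \<le> card (equal_block_pairs x k m)"
    by (rule card_mono[OF finite_subset[OF equal_block_pairs_subset], rotated]) simp
  moreover have "lam * (lam + 1) \<le> card S * (card S - 1)"
    using mult_le_mono[of "lam + 1" "card S" lam "card S - 1"] card_S
    by (simp add: S_def mult.commute)
  ultimately show ?thesis
    by (simp add: card_off_diagonal S_def)
qed

lemma not_disjoint_family_on_if_card_less:
  assumes "finite U" "finite I" "\<And>i. i \<in> I \<Longrightarrow> P i \<subseteq> U"
    and "\<And>i. i \<in> I \<Longrightarrow> c \<le> card (P i)" and "card U < card I * c"
  shows "\<not> disjoint_family_on P I"
proof
  assume "disjoint_family_on P I"
  then have "card (\<Union>i\<in>I. P i) = (\<Sum>i\<in>I. card (P i))"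
    using assms(1-3) by (intro card_UN_disjoint') (auto intro: finite_subset)
  also have "\<dots> \<ge> card I * c"
    using sum_bounded_below[of I c "\<lambda>i. card (P i)"] assms(4) by simp
  moreover have "card (\<Union>i\<in>I. P i) \<le> card U"
    using assms(1,3) by (intro card_mono) auto
  ultimately show False
    using assms(5) by linarith
qed

lemma shifted_block_eq:
  assumes "block x m a = block x m b" and "block x (m + e) a = block x (m + e) b"
    and "a*e + i < m"
  shows "x (b*m + a*e + i) = x (b*(m + e) + i)"
proof -
  have "x (b*m + (a*e + i)) = x (a*m + (a*e + i))"
    using assms(1,3) by (simp add: block_eq_iff)
  also have "\<dots> = x (a*(m + e) + i)"
    by (simp add: algebra_simps)
  also have "\<dots> = x (b*(m + e) + i)"
    using assms(2,3) by (simp add: block_eq_iff)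
  finally show ?thesis
    by (simp add: add.assoc)
qed

lemma is_factor_lpow_if_equal_blocks:
  assumes "a < b" and "block x m a = block x m b" and "block x (m + e) a = block x (m + e) b"
    and "a*e + l*((b - a)*e) \<le> m + (b - a)*e" and "e > 0"
  shows "is_factor (lpow (map x [b*m + a*e..<b*m + a*e + (b - a)*e]) l) x"
proof (rule is_factor_lpow_if_periodic)
  show "\<forall>i. i + (b - a)*e < m - a*e + (b - a)*e \<longrightarrow>
      x (b*m + a*e + i) = x (b*m + a*e + i + (b - a)*e)"
  proof (intro allI impI)
    fix i assume "i + (b - a)*e < m - a*e + (b - a)*e"
    then have "a*e + i < m" by linarith
    with assms(2,3) have "x (b*m + a*e + i) = x (b*(m + e) + i)"
      by (rule shifted_block_eq)
    also have "b*(m + e) + i = b*m + a*e + i + (b - a)*e"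
      using mult_le_mono1[of a b e] assms(1) unfolding diff_mult_distrib distrib_left by linarith
    finally show "x (b*m + a*e + i) = x (b*m + a*e + i + (b - a)*e)" .
  qed
qed (use assms in auto)

lemma card_inter_atLeastAtMost_ge_if_meets_windows:
  fixes S :: "nat set"
  assumes "M \<ge> 1" and windows: "\<forall>s\<ge>M. \<exists>e\<le>N. s + e \<in> S"
  shows "real n - real M - real N \<le> real (N + 1) * real (card (S \<inter> {1..n}))"
proof -
  define B where "B = (n + 1 - M) div (N + 1)"
  have "{..<B} \<subseteq> (\<lambda>s. (s - M) div (N + 1)) ` (S \<inter> {1..n})"
  proof
    fix i assume "i \<in> {..<B}"
    then have "(i + 1) * (N + 1) \<le> B * (N + 1)"
      by (intro mult_le_mono1) simp
    also have "\<dots> \<le> n + 1 - M"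
      unfolding B_def by (rule div_times_less_eq_dividend)
    finally have "(i + 1) * (N + 1) \<le> n + 1 - M" .
    obtain e where "e \<le> N" and "M + i*(N + 1) + e \<in> S"
      using windows by (meson le_add1)
    moreover have "M + i*(N + 1) + e \<le> n"
      using \<open>e \<le> N\<close> \<open>(i + 1) * (N + 1) \<le> n + 1 - M\<close> by simp
    moreover have "(e + i*(N + 1)) div (N + 1) = i"
      using \<open>e \<le> N\<close> by (subst div_mult_self1) simp_all
    ultimately show "i \<in> (\<lambda>s. (s - M) div (N + 1)) ` (S \<inter> {1..n})"
      using assms(1) by (intro image_eqI[of _ _ "M + i*(N + 1) + e"]) (auto simp: add.commute)
  qed
  then have "card {..<B} \<le> card ((\<lambda>s. (s - M) div (N + 1)) ` (S \<inter> {1..n}))"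
    by (intro card_mono) simp_all
  also have "\<dots> \<le> card (S \<inter> {1..n})"
    by (intro card_image_le) simp
  finally have "(N + 1) * B \<le> (N + 1) * card (S \<inter> {1..n})"
    by (intro mult_le_mono2) simp
  moreover have "n + 1 - M < (B + 1) * (N + 1)"
    unfolding B_def using dividend_less_div_times[of "N + 1" "n + 1 - M"] by simp
  ultimately have "n \<le> (N + 1) * card (S \<inter> {1..n}) + M + N"
    by (simp add: algebra_simps)
  then have "real n \<le> real ((N + 1) * card (S \<inter> {1..n}) + M + N)"
    by (simp only: of_nat_le_iff)
  then show ?thesis
    by (simp add: algebra_simps)
qed

lemma lower_density_ge_if_meets_windows:
  fixes S :: "nat set"
  assumes "\<forall>s\<ge>M. \<exists>e\<le>N. s + e \<in> S"
  shows "ereal (1 / (1 + real N)) \<le> lower_density S"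
proof -
  have windows: "\<forall>s\<ge>M + 1. \<exists>e\<le>N. s + e \<in> S"
    using assms by simp
  define c where "c = (real (M + 1) + real N) / (1 + real N)"
  define g where "g n = 1 / (1 + real N) - c / real n" for n :: nat
  have "g \<longlonglongrightarrow> 1 / (1 + real N)"
    unfolding g_def using tendsto_diff[OF tendsto_const lim_const_over_n] by simp
  then have "liminf (\<lambda>n. ereal (g n)) = ereal (1 / (1 + real N))"
    by (intro lim_imp_Liminf) simp_all
  moreover have "eventually (\<lambda>n. ereal (g n) \<le> ereal (real (card (S \<inter> {1..n})) / real n))
      sequentially"
  proof (rule eventually_sequentiallyI)
    fix n :: nat assume "1 \<le> n"
    have "g n = (real n - real (M + 1) - real N) / (real (N + 1) * real n)"
      using \<open>1 \<le> n\<close> by (simp add: g_def c_def diff_divide_distrib add_divide_distrib)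
    also have "\<dots> \<le> real (N + 1) * real (card (S \<inter> {1..n})) / (real (N + 1) * real n)"
      using windows by (intro divide_right_mono card_inter_atLeastAtMost_ge_if_meets_windows) simp_all
    also have "\<dots> = real (card (S \<inter> {1..n})) / real n"
      by simp
    finally show "ereal (g n) \<le> ereal (real (card (S \<inter> {1..n})) / real n)"
      by simp
  qed
  then have "liminf (\<lambda>n. ereal (g n)) \<le> lower_density S"
    unfolding lower_density_def by (rule Liminf_mono)
  ultimately show ?thesis
    by simp
qed

lemma ex_gap_if_lower_density_less:
  fixes S :: "nat set"
  assumes "lower_density S < ereal (1 / (1 + real N))"
  shows "\<exists>s\<ge>M. \<forall>e\<le>N. s + e \<notin> S"
  using lower_density_ge_if_meets_windows[of M N S] assms by force

lemma ex_common_equal_block_pair: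
  assumes "1 \<le> s" and gap: "\<forall>e\<le>N. s + e \<notin> AP x k lam"
    and "k*k - k < (N + 1) * (lam * (lam + 1))"
  obtains m e a b where "s \<le> m" "0 < e" "m + e \<le> s + N" "a < b" "b < k"
    "block x m a = block x m b" "block x (m + e) a = block x (m + e) b"
proof -
  let ?P = "\<lambda>e. equal_block_pairs x k (s + e)"
  have "\<not> disjoint_family_on ?P {..N}"
  proof (rule not_disjoint_family_on_if_card_less)
    show "lam * (lam + 1) \<le> card (?P e)" if "e \<in> {..N}" for e
      using assms(1) gap that by (intro card_equal_block_pairs_ge) (auto simp: AP_def)
    show "card ({..<k} \<times> {..<k} - Id_on {..<k}) < card {..N} * (lam * (lam + 1))"
      using assms(3) by (simp add: card_off_diagonal diff_mult_distrib2)
  qed (simp_all add: equal_block_pairs_subset)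
  then obtain i j where "i \<le> N" "j \<le> N" "i \<noteq> j" "?P i \<inter> ?P j \<noteq> {}"
    unfolding disjoint_family_on_def by auto
  then obtain e1 e2 where "e1 < e2" "e2 \<le> N" "?P e1 \<inter> ?P e2 \<noteq> {}"
  proof (cases "i < j")
    case False
    with \<open>i \<noteq> j\<close> have "j < i" by simp
    with \<open>i \<le> N\<close> \<open>?P i \<inter> ?P j \<noteq> {}\<close> show ?thesis
      using that[of j i] by (simp add: inf_commute)
  qed simp
  then obtain a b where ab: "(a, b) \<in> ?P e1" "(a, b) \<in> ?P e2"
    by auto
  have swap: "(b, a) \<in> ?P e" if "(a, b) \<in> ?P e" for a b e
    using that by (auto simp: equal_block_pairs_def)
  obtain a' b' where "a' < b'" "(a', b') \<in> ?P e1" "(a', b') \<in> ?P e2"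
  proof (cases "a < b")
    case True
    with ab that show ?thesis by blast
  next
    case False
    with ab have "b < a"
      by (auto simp: equal_block_pairs_def)
    with ab swap that show ?thesis by blast
  qed
  with \<open>e1 < e2\<close> \<open>e2 \<le> N\<close> show thesis
    by (intro that[of "s + e1" "e2 - e1" a' b']) (auto simp: equal_block_pairs_def)
qed

lemma ex_power_factor_if_gap:
  assumes "1 \<le> s" and "\<forall>e\<le>N. s + e \<notin> AP x k lam"
    and "k*k - k < (N + 1) * (lam * (lam + 1))"
    and "1 \<le> l" and "l*(k - 1)*N \<le> s"
  shows "\<exists>u. u \<noteq> [] \<and> length u \<le> (k - 1)*N \<and> is_factor (lpow u l) x"
proof -
  obtain m e a b where "s \<le> m" "0 < e" "m + e \<le> s + N" "a < b" "b < k"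
    and blocks: "block x m a = block x m b" "block x (m + e) a = block x (m + e) b"
    using ex_common_equal_block_pair[OF assms(1-3)] .
  have "(b - a)*e \<le> (k - 1)*N" and "b*e \<le> (k - 1)*N"
    using \<open>b < k\<close> \<open>m + e \<le> s + N\<close> \<open>s \<le> m\<close> by (intro mult_le_mono; linarith)+
  obtain l' where "l = Suc l'"
    using \<open>1 \<le> l\<close> by (cases l) auto
  have "a*e + (b - a)*e = b*e"
    using \<open>a < b\<close> by (metis add_mult_distrib le_add_diff_inverse less_imp_le)
  then have "a*e + l*((b - a)*e) = b*e + l'*((b - a)*e)"
    using \<open>l = Suc l'\<close> by simp
  also have "\<dots> \<le> (k - 1)*N + l'*((k - 1)*N)"
    using \<open>b*e \<le> (k - 1)*N\<close> \<open>(b - a)*e \<le> (k - 1)*N\<close> by (intro add_mono mult_le_mono2)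
  also have "\<dots> = l*(k - 1)*N"
    unfolding \<open>l = Suc l'\<close> by (simp only: mult_Suc add_mult_distrib mult.assoc)
  also have "\<dots> \<le> m + (b - a)*e"
    using assms(5) \<open>s \<le> m\<close> by simp
  finally have "is_factor (lpow (map x [b*m + a*e..<b*m + a*e + (b - a)*e]) l) x"
    using \<open>a < b\<close> blocks \<open>0 < e\<close> by (intro is_factor_lpow_if_equal_blocks)
  with \<open>(b - a)*e \<le> (k - 1)*N\<close> \<open>a < b\<close> \<open>0 < e\<close> show ?thesis
    by (intro exI[of _ "map x [b*m + a*e..<b*m + a*e + (b - a)*e]"]) simp
qed

theorem corollary3p5:
  fixes x :: "nat \<Rightarrow> 'a" and k lam :: nat
  assumes "k \<ge> 1" and "lam \<ge> 1"
    and "lower_density (AP x k lam)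
           < ereal (1 / (1 + real ((k^2 - k) div (lam^2 + lam))))"
  shows "\<forall>l::nat. l \<ge> 1 \<longrightarrow> (\<exists>u::'a list. u \<noteq> [] \<and>
           length u \<le> (k - 1) * ((k^2 - k) div (lam^2 + lam)) \<and> is_factor (lpow u l) x)"
proof (intro allI impI)
  fix l :: nat assume "l \<ge> 1"
  define N where "N = (k^2 - k) div (lam^2 + lam)"
  have "k*k - k < (N + 1) * (lam * (lam + 1))"
    using dividend_less_div_times[of "lam^2 + lam" "k^2 - k"] assms(2)
    by (simp add: N_def power2_eq_square algebra_simps)
  moreover obtain s where "max 1 (l*(k - 1)*N) \<le> s" "\<forall>e\<le>N. s + e \<notin> AP x k lam"
    using ex_gap_if_lower_density_less assms(3) unfolding N_def by blast
  ultimately show "\<exists>u. u \<noteq> [] \<and>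
      length u \<le> (k - 1) * ((k^2 - k) div (lam^2 + lam)) \<and> is_factor (lpow u l) x"
    using ex_power_factor_if_gap[of s N x k lam l] \<open>l \<ge> 1\<close> unfolding N_def by simp
qed

end
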